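(* Let $\mathfrak{m}$ be a maximal ideal of $K(\!(\mathbf{t})\!)^\circ$. Then the composition of the inclusion $K\hookrightarrow K(\!(\mathbf{t})\!)^\circ$ with the quotient map $K(\!(\mathbf{t})\!)^\circ\to K(\!(\mathbf{t})\!)^\circ/\mathfrak{m}$ is an isomorphism; consequently $K(\!(\mathbf{t})\!)^\circ/\mathfrak{m}\cong K$.
   Context: $K$ is a field of characteristic zero, $\mathbf{t}=(t_1,\dots,t_m)$, $K(\!(\mathbf{t})\!)=\operatorname{Frac}K[\![\mathbf{t}]\!]$. $V\mathbb{B}[\mathbf{t}]$ is the semiring of subsets of $\mathbb{N}^m$ equal to the vertex set of their Newton polyhedron $\operatorname{conv}(\cdot)+\mathbb{R}^m_{\ge0}$, with $a\oplus b$ = vertices of the Newton polyhedron of $a\cup b$, $a\odot b$ = vertices of that of $a+b$; $V\mathbb{B}(\mathbf{t})$ is its fraction semifield, ordered by $a/b\le c/d$ iff $a\odot d\oplus b\odot c=b\odot c$. $\operatorname{trop}(f)$ is the vertex set of the Newton polyhedron of $\operatorname{Supp}(f)$, $\operatorname{trop}(f/g)=\operatorname{trop}(f)/\operatorname{trop}(g)$, and $K(\!(\mathbf{t})\!)^\circ=\{q:\operatorname{trop}(q)\le1\}$, a subring containing $K$. *)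

theory Defs
  imports "HOL-Analysis.Analysis" "HOL-Algebra.QuotRing"
begin

text \<open>Variables t_i are indexed by a finite type 'n (so m = CARD('n)).
  Exponent vectors are functions 'n => nat; a formal power series in K[[t]]
  is an arbitrary coefficient function ('n => nat) => 'k.\<close>

type_synonym ('n, 'k) mps = "('n \<Rightarrow> nat) \<Rightarrow> 'k"

definition ps_zero :: "('n, 'k::field) mps" where
  "ps_zero = (\<lambda>e. 0)"

definition ps_const :: "'k::field \<Rightarrow> ('n, 'k) mps" where
  "ps_const c = (\<lambda>e. if e = (\<lambda>i. 0) then c else 0)"

definition ps_add :: "('n, 'k::field) mps \<Rightarrow> ('n, 'k) mps \<Rightarrow> ('n, 'k) mps" where
  "ps_add f g = (\<lambda>e. f e + g e)"

definition ps_mult :: "('n::finite, 'k::field) mps \<Rightarrow> ('n, 'k) mps \<Rightarrow> ('n, 'k) mps" where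
  "ps_mult f g = (\<lambda>e. \<Sum>a\<in>{a. \<forall>i. a i \<le> e i}. f a * g (\<lambda>i. e i - a i))"

text \<open>The fraction field K((t)) = Frac K[[t]]: classes of pairs (f, g), g \<noteq> 0.\<close>

definition frac_rel :: "('n::finite, 'k::field) mps \<times> ('n, 'k) mps \<Rightarrow> ('n, 'k) mps \<times> ('n, 'k) mps \<Rightarrow> bool" where
  "frac_rel p q \<longleftrightarrow> snd p \<noteq> ps_zero \<and> snd q \<noteq> ps_zero \<and>
     ps_mult (fst p) (snd q) = ps_mult (fst q) (snd p)"

definition frac_class :: "('n::finite, 'k::field) mps \<times> ('n, 'k) mps \<Rightarrow> (('n, 'k) mps \<times> ('n, 'k) mps) set" where
  "frac_class p = {q. frac_rel p q}"

definition laurent_set :: "(('n::finite, 'k::field) mps \<times> ('n, 'k) mps) set set" where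
  "laurent_set = {frac_class p | p. snd p \<noteq> ps_zero}"

definition frac_rep :: "(('n::finite, 'k::field) mps \<times> ('n, 'k) mps) set \<Rightarrow> ('n, 'k) mps \<times> ('n, 'k) mps" where
  "frac_rep q = (SOME p. p \<in> q)"

definition frac_add where
  "frac_add q r = frac_class
     (ps_add (ps_mult (fst (frac_rep q)) (snd (frac_rep r))) (ps_mult (fst (frac_rep r)) (snd (frac_rep q))),
      ps_mult (snd (frac_rep q)) (snd (frac_rep r)))"

definition frac_mult where
  "frac_mult q r = frac_class
     (ps_mult (fst (frac_rep q)) (fst (frac_rep r)), ps_mult (snd (frac_rep q)) (snd (frac_rep r)))"

definition frac_of_const :: "'k::field \<Rightarrow> (('n::finite, 'k) mps \<times> ('n, 'k) mps) set" where
  "frac_of_const c = frac_class (ps_const c, ps_const 1)"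

definition emb :: "('n::finite \<Rightarrow> nat) \<Rightarrow> real^'n" where
  "emb e = (\<chi> i. real (e i))"

definition newton :: "('n::finite \<Rightarrow> nat) set \<Rightarrow> (real^'n) set" where
  "newton S = {x + y | x y. x \<in> convex hull (emb ` S) \<and> (\<forall>i. 0 \<le> y $ i)}"

definition vert :: "('n::finite \<Rightarrow> nat) set \<Rightarrow> ('n \<Rightarrow> nat) set" where
  "vert S = {e. emb e extreme_point_of newton S}"

definition VB_add :: "('n::finite \<Rightarrow> nat) set \<Rightarrow> ('n \<Rightarrow> nat) set \<Rightarrow> ('n \<Rightarrow> nat) set" where
  "VB_add a b = vert (a \<union> b)"

definition VB_mult :: "('n::finite \<Rightarrow> nat) set \<Rightarrow> ('n \<Rightarrow> nat) set \<Rightarrow> ('n \<Rightarrow> nat) set" where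
  "VB_mult a b = vert {(\<lambda>i. x i + y i) | x y. x \<in> a \<and> y \<in> b}"

definition VB_one :: "('n::finite \<Rightarrow> nat) set" where
  "VB_one = {\<lambda>i. 0}"

definition VB_frac_le :: "('n::finite \<Rightarrow> nat) set \<times> ('n \<Rightarrow> nat) set \<Rightarrow> ('n \<Rightarrow> nat) set \<times> ('n \<Rightarrow> nat) set \<Rightarrow> bool" where
  "VB_frac_le ab cd \<longleftrightarrow>
     VB_add (VB_mult (fst ab) (snd cd)) (VB_mult (snd ab) (fst cd)) = VB_mult (snd ab) (fst cd)"

definition trop :: "('n::finite, 'k::field) mps \<Rightarrow> ('n \<Rightarrow> nat) set" where
  "trop f = vert {e. f e \<noteq> 0}"

definition Kcirc_set :: "(('n::finite, 'k::field) mps \<times> ('n, 'k) mps) set set" where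
  "Kcirc_set = {q \<in> laurent_set. \<exists>p\<in>q. VB_frac_le (trop (fst p), trop (snd p)) (VB_one, VB_one)}"

definition Kcirc :: "(('n::finite, 'k::field) mps \<times> ('n, 'k) mps) set ring" where
  "Kcirc = \<lparr>carrier = Kcirc_set, monoid.mult = frac_mult, one = frac_of_const 1,
            zero = frac_of_const 0, add = frac_add\<rparr>"

definition type_ring :: "'k::field ring" where
  "type_ring = \<lparr>carrier = UNIV, monoid.mult = (*), one = 1, zero = 0, add = (+)\<rparr>"

end

theory Submission
  imports Defs "HOL-Library.Function_Algebras" "HOL-Computational_Algebra.Fraction_Field"
begin

text \<open>
  Write an element of \<open>K((t))\<degree>\<close> as \<open>x = f/g\<close> with the support of \<open>f\<close> inside the Newton
  polyhedron of \<open>g\<close>. For each vertex \<open>w\<close> of that polyhedron let \<open>c\<^sub>w = f\<^sub>w / g\<^sub>w\<close>, so that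
  \<open>x - c\<^sub>w = h\<^sub>w / g\<close> with \<open>h\<^sub>w\<close> vanishing at \<open>w\<close>. A vertex of the Newton polyhedron of \<open>g\<^sup>n\<close>
  (\<open>n\<close> the number of vertices) is \<open>n\<close> times a vertex \<open>a\<close> of \<open>g\<close>, and there the coefficient of
  \<open>\<Prod>\<^sub>w h\<^sub>w\<close> is \<open>\<Prod>\<^sub>w h\<^sub>w(a) = 0\<close>. Quotients \<open>H/G\<close> with \<open>H\<close> vanishing on the vertices of \<open>G\<close> lie
  in the Jacobson radical: in \<open>1 + s H/G\<close> the vertex coefficients of the denominator survive
  in the numerator, so it is a unit. Hence \<open>\<Prod>\<^sub>w (x - c\<^sub>w)\<close> lies in every maximal ideal \<open>\<mm>\<close>,
  and as \<open>\<mm>\<close> is prime, \<open>x \<equiv> c\<^sub>w\<close> modulo \<open>\<mm>\<close> for some \<open>w\<close>. The map \<open>K \<rightarrow> K((t))\<degree>/\<mm>\<close> is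
  injective because \<open>K\<close> is a field.
\<close>

section \<open>Newton polyhedra\<close>

definition orthant :: "(real^'n::finite) set" where
  "orthant = {y. \<forall>i. 0 \<le> y $ i}"

lemma newton_eq: "newton S = convex hull (emb ` S) + orthant"
  unfolding newton_def orthant_def set_plus_def by auto

lemma convex_orthant: "convex orthant"
  unfolding orthant_def convex_def by (auto intro!: add_nonneg_nonneg mult_nonneg_nonneg)

lemma orthant_add: "x \<in> orthant \<Longrightarrow> y \<in> orthant \<Longrightarrow> x + y \<in> orthant"
  unfolding orthant_def by auto

lemma convex_newton: "convex (newton S)"
  unfolding newton_eq by (rule convex_set_plus[OF convex_convex_hull convex_orthant])

lemma newton_add_orthant:
  assumes "x \<in> newton S" "y \<in> orthant" shows "x + y \<in> newton S"
proof -
  obtain c q where "c \<in> convex hull (emb ` S)" "q \<in> orthant" "x = c + q"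
    using assms(1) unfolding newton_eq by (auto elim!: set_plus_elim)
  moreover from this have "c + (q + y) \<in> convex hull (emb ` S) + orthant"
    using assms(2) by (simp add: orthant_add set_plus_intro)
  ultimately show ?thesis by (simp add: newton_eq add.assoc)
qed

lemma convex_hull_subset_newton: "convex hull (emb ` S) \<subseteq> newton S"
proof
  fix x assume "x \<in> convex hull (emb ` S)"
  then have "x + 0 \<in> convex hull (emb ` S) + orthant"
    by (rule set_plus_intro) (simp add: orthant_def)
  then show "x \<in> newton S" by (simp add: newton_eq)
qed

lemma emb_in_newton: "e \<in> S \<Longrightarrow> emb e \<in> newton S"
  by (rule subsetD[OF convex_hull_subset_newton hull_inc]) simp

lemma newton_subsetI:
  assumes "emb ` S \<subseteq> newton T" shows "newton S \<subseteq> newton T"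
proof
  fix x assume "x \<in> newton S"
  then obtain c q where c: "c \<in> convex hull (emb ` S)" and q: "q \<in> orthant" and x: "x = c + q"
    unfolding newton_eq by (auto elim!: set_plus_elim)
  have "c \<in> newton T"
    using c hull_minimal[where S = convex, OF assms convex_newton] by blast
  then show "x \<in> newton T" unfolding x by (rule newton_add_orthant[OF _ q])
qed

lemma newton_mono: "S \<subseteq> T \<Longrightarrow> newton S \<subseteq> newton T"
  by (rule newton_subsetI) (auto intro: emb_in_newton)

lemma emb_add: "emb (a + b) = emb a + emb b"
  unfolding emb_def by (simp add: vec_eq_iff)

lemma inj_emb: "inj emb"
  unfolding emb_def inj_def by (auto simp: vec_eq_iff fun_eq_iff)

lemma emb_set_plus: "emb ` (A + B) = emb ` A + emb ` B"
  unfolding set_plus_image by (simp add: image_image emb_add case_prod_beta flip: map_prod_surj_on)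

lemma newton_set_plus:
  assumes "x \<in> newton A" "y \<in> newton B" shows "x + y \<in> newton (A + B)"
proof -
  obtain c q where c: "c \<in> convex hull (emb ` A)" and q: "q \<in> orthant" and x: "x = c + q"
    using assms(1) unfolding newton_eq by (auto elim!: set_plus_elim)
  obtain d r where d: "d \<in> convex hull (emb ` B)" and r: "r \<in> orthant" and y: "y = d + r"
    using assms(2) unfolding newton_eq by (auto elim!: set_plus_elim)
  have "c + d \<in> convex hull (emb ` (A + B))"
    unfolding emb_set_plus convex_hull_set_plus using c d by (rule set_plus_intro)
  moreover have "x + y = (c + d) + (q + r)" using x y by (simp add: algebra_simps)
  ultimately show ?thesis
    unfolding newton_eq using orthant_add[OF q r] by (simp add: set_plus_intro)
qed

lemma extreme_point_of_newton_in_hull: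
  assumes "x extreme_point_of newton S" shows "x \<in> convex hull (emb ` S)"
proof -
  have "x \<in> newton S" using assms by (simp add: extreme_point_of_def)
  then obtain c q where c: "c \<in> convex hull (emb ` S)" and q: "q \<in> orthant" and x: "x = c + q"
    unfolding newton_eq by (auto elim!: set_plus_elim)
  have cN: "c \<in> newton S" using c convex_hull_subset_newton by blast
  have "q = 0"
  proof (rule ccontr)
    assume "q \<noteq> 0"
    have "(1/2) *\<^sub>R q \<in> orthant" "(3/2) *\<^sub>R q \<in> orthant" using q unfolding orthant_def by auto
    then have ends: "c + (1/2) *\<^sub>R q \<in> newton S" "c + (3/2) *\<^sub>R q \<in> newton S"
      using cN newton_add_orthant by blast+
    have "x = midpoint (c + (1/2) *\<^sub>R q) (c + (3/2) *\<^sub>R q)"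
      unfolding midpoint_def x by (simp add: vec_eq_iff algebra_simps)
    then have "x \<in> open_segment (c + (1/2) *\<^sub>R q) (c + (3/2) *\<^sub>R q)"
      using \<open>q \<noteq> 0\<close> by (simp add: midpoint_in_open_segment)
    with assms ends show False unfolding extreme_point_of_def by blast
  qed
  then show ?thesis using c x by simp
qed

lemma vert_subset: "vert S \<subseteq> S"
proof
  fix e assume "e \<in> vert S"
  then have ext: "emb e extreme_point_of newton S" by (simp add: vert_def)
  have "emb e extreme_point_of convex hull (emb ` S)"
    using ext extreme_point_of_newton_in_hull[OF ext] convex_hull_subset_newton
    unfolding extreme_point_of_def by blast
  then have "emb e \<in> emb ` S" by (rule extreme_point_of_convex_hull)
  then show "e \<in> S" using inj_emb by (auto dest: injD)
qed

lemma vert_cong: "newton S = newton T \<Longrightarrow> vert S = vert T"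
  by (simp add: vert_def)

lemma newton_subset_iff: "newton S \<subseteq> newton T \<longleftrightarrow> emb ` S \<subseteq> newton T"
  using newton_subsetI emb_in_newton by blast

lemma newton_Un_eq_iff: "newton (S \<union> T) = newton T \<longleftrightarrow> emb ` S \<subseteq> newton T"
proof
  assume "newton (S \<union> T) = newton T"
  then show "emb ` S \<subseteq> newton T" by (metis Un_upper1 newton_subset_iff newton_mono)
next
  assume "emb ` S \<subseteq> newton T"
  then have "newton (S \<union> T) \<subseteq> newton T"
    unfolding newton_subset_iff using emb_in_newton by blast
  then show "newton (S \<union> T) = newton T" by (simp add: newton_mono subset_antisym)
qed

lemma not_extreme_newton_decomp:
  assumes ext: "x extreme_point_of convex hull (emb ` P)"
    and not_ext: "\<not> x extreme_point_of newton P" and x: "x \<in> newton P"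
  obtains c y where "c \<in> convex hull (emb ` P)" "y \<in> orthant" "y \<noteq> 0" "x = c + y"
proof -
  from not_ext x obtain a b where "a \<in> newton P" "b \<in> newton P"
    and seg: "x \<in> open_segment a b"
    unfolding extreme_point_of_def by auto
  then obtain ca ya cb yb where ca: "ca \<in> convex hull (emb ` P)" and ya: "ya \<in> orthant"
    and cb: "cb \<in> convex hull (emb ` P)" and yb: "yb \<in> orthant" and ab: "a = ca + ya" "b = cb + yb"
    unfolding newton_eq by (auto elim!: set_plus_elim)
  from seg obtain u where u: "0 < u" "u < 1" and xu: "x = (1 - u) *\<^sub>R a + u *\<^sub>R b"
    unfolding in_segment by auto
  define c where "c = (1 - u) *\<^sub>R ca + u *\<^sub>R cb"
  define y where "y = (1 - u) *\<^sub>R ya + u *\<^sub>R yb"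
  have "c \<in> convex hull (emb ` P)"
    unfolding c_def by (rule convexD[OF convex_convex_hull ca cb]) (use u in auto)
  moreover have "y \<in> orthant"
    using ya yb u unfolding y_def orthant_def by (auto intro!: add_nonneg_nonneg mult_nonneg_nonneg)
  moreover have "y \<noteq> 0"
  proof
    assume "y = 0"
    have "ya $ i = 0 \<and> yb $ i = 0" for i
    proof -
      have "(1 - u) * ya $ i + u * yb $ i = 0" "0 \<le> (1 - u) * ya $ i" "0 \<le> u * yb $ i"
        using \<open>y = 0\<close> ya yb u unfolding y_def orthant_def by (auto simp: vec_eq_iff)
      then have "(1 - u) * ya $ i = 0" "u * yb $ i = 0" by linarith+
      with u show ?thesis by simp
    qed
    then have "ya = 0" "yb = 0" by (simp_all add: vec_eq_iff)
    then have "x \<in> open_segment ca cb" using seg ab by simp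
    with ext ca cb show False unfolding extreme_point_of_def by blast
  qed
  moreover have "x = c + y" unfolding xu ab c_def y_def by (simp add: algebra_simps)
  ultimately show ?thesis by (rule that)
qed

lemma convex_hull_insert_plus_orthant:
  assumes c: "c \<in> convex hull (insert x E)" and y: "y \<in> orthant" "y \<noteq> 0" and x: "x = c + y"
  shows "x \<in> convex hull E + orthant"
proof -
  have ne: "E \<noteq> {}"
  proof
    assume "E = {}"
    with c x y show False by simp
  qed
  obtain s t d where st: "0 \<le> s" "0 \<le> t" "s + t = 1" and d: "d \<in> convex hull E"
    and cd: "c = s *\<^sub>R x + t *\<^sub>R d"
    using c unfolding convex_hull_insert[OF ne] by blast
  have "x = s *\<^sub>R x + (t *\<^sub>R d + y)" using x cd by (simp add: add.assoc)
  then have "x - s *\<^sub>R x = t *\<^sub>R d + y" by (metis add_diff_cancel_left')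
  moreover have "t = 1 - s" using st by simp
  ultimately have tx: "t *\<^sub>R x = t *\<^sub>R d + y" by (simp add: scaleR_diff_left)
  with y have "t \<noteq> 0" by auto
  have "x = (1 / t) *\<^sub>R (t *\<^sub>R x)" using \<open>t \<noteq> 0\<close> by simp
  also have "\<dots> = d + (1 / t) *\<^sub>R y" using tx \<open>t \<noteq> 0\<close> by (simp add: scaleR_add_right)
  finally have "x = d + (1 / t) *\<^sub>R y" .
  moreover have "(1 / t) *\<^sub>R y \<in> orthant" using y st unfolding orthant_def by simp
  ultimately show ?thesis using d by (simp add: set_plus_intro)
qed

lemma emb_in_newton_Diff:
  assumes fin: "finite P" and p: "p \<in> P" and not_ext: "\<not> emb p extreme_point_of newton P"
  shows "emb p \<in> newton (P - {p})"
proof (cases "emb p \<in> convex hull (emb ` (P - {p}))")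
  case True
  then show ?thesis using convex_hull_subset_newton by blast
next
  case False
  have eP: "emb ` P = insert (emb p) (emb ` (P - {p}))" using p by blast
  have "emb p extreme_point_of convex hull (emb ` P)"
    unfolding eP by (rule extreme_point_of_convex_hull_insert) (use fin False in auto)
  then obtain c y where "c \<in> convex hull (emb ` P)" "y \<in> orthant" "y \<noteq> 0" "emb p = c + y"
    using not_extreme_newton_decomp not_ext emb_in_newton[OF p] by metis
  then show ?thesis
    unfolding newton_eq using convex_hull_insert_plus_orthant eP by metis
qed

lemma newton_vert_of_finite: "finite P \<Longrightarrow> newton (vert P) = newton P"
proof (induction "card P" arbitrary: P rule: less_induct)
  case less
  show ?case
  proof (cases "\<forall>p\<in>P. emb p extreme_point_of newton P")
    case True
    then have "vert P = P" using vert_subset by (auto simp: vert_def)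
    then show ?thesis by simp
  next
    case False
    then obtain p where p: "p \<in> P" and not_ext: "\<not> emb p extreme_point_of newton P" by blast
    have "emb ` {p} \<subseteq> newton (P - {p})" using emb_in_newton_Diff[OF less.prems p not_ext] by simp
    then have "newton ({p} \<union> (P - {p})) = newton (P - {p})" by (rule newton_Un_eq_iff[THEN iffD2])
    then have eq: "newton P = newton (P - {p})" using p by (simp add: insert_absorb)
    have "card (P - {p}) < card P" by (rule card_Diff1_less[OF less.prems p])
    then have "newton (vert (P - {p})) = newton (P - {p})" using less by simp
    then show ?thesis using eq vert_cong[OF eq] by simp
  qed
qed

lemma restrict_antichain_cover:
  assumes a0: "a0 \<in> A"
    and anti: "\<And>a b. a \<in> A \<Longrightarrow> b \<in> A \<Longrightarrow> \<forall>i\<in>I. a i \<le> (b i :: nat) \<Longrightarrow> \<forall>i\<in>I. a i = b i"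
  shows "(\<lambda>a. restrict a I) ` A \<subseteq> insert (restrict a0 I)
    (\<Union>i\<in>I. \<Union>k\<in>{..<a0 i}. (\<lambda>r. r(i := k)) ` ((\<lambda>a. restrict a (I - {i})) ` {b \<in> A. b i = k}))"
proof (rule image_subsetI)
  fix b assume b: "b \<in> A"
  show "restrict b I \<in> insert (restrict a0 I)
    (\<Union>i\<in>I. \<Union>k\<in>{..<a0 i}. (\<lambda>r. r(i := k)) ` ((\<lambda>a. restrict a (I - {i})) ` {b \<in> A. b i = k}))"
  proof (cases "\<forall>i\<in>I. a0 i \<le> b i")
    case True
    then have "restrict b I = restrict a0 I"
      using anti[OF a0 b] by (auto simp: restrict_def fun_eq_iff)
    then show ?thesis by simp
  next
    case False
    then obtain i where i: "i \<in> I" "b i < a0 i" by (auto simp: not_le)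
    have "restrict b I = (restrict b (I - {i}))(i := b i)"
      using i by (auto simp: restrict_def fun_eq_iff)
    with b i show ?thesis by blast
  qed
qed

lemma finite_restrict_antichain:
  assumes "finite I"
    and "\<And>a b. a \<in> A \<Longrightarrow> b \<in> A \<Longrightarrow> \<forall>i\<in>I. a i \<le> (b i :: nat) \<Longrightarrow> \<forall>i\<in>I. a i = b i"
  shows "finite ((\<lambda>a. restrict a I) ` A)"
  using assms
proof (induction "card I" arbitrary: I A rule: less_induct)
  case less
  show ?case
  proof (cases "A = {}")
    case False
    then obtain a0 where a0: "a0 \<in> A" by blast
    have "finite ((\<lambda>a. restrict a (I - {i})) ` {b \<in> A. b i = k})" if i: "i \<in> I" for i k
    proof (rule less.hyps)
      show "card (I - {i}) < card I" by (rule card_Diff1_less[OF less.prems(1) i])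
      show "finite (I - {i})" using less.prems(1) by simp
      fix a b assume ab: "a \<in> {b \<in> A. b i = k}" "b \<in> {b \<in> A. b i = k}"
        and le: "\<forall>j\<in>I - {i}. a j \<le> b j"
      have "\<forall>j\<in>I. a j \<le> b j"
      proof
        fix j assume "j \<in> I"
        with ab le show "a j \<le> b j" by (cases "j = i") auto
      qed
      then show "\<forall>j\<in>I - {i}. a j = b j" using less.prems(2)[of a b] ab by simp
    qed
    then show ?thesis
      by (intro finite_subset[OF restrict_antichain_cover[OF a0 less.prems(2)]])
         (use less.prems(1) in auto)
  qed simp
qed

lemma finite_antichain:
  fixes A :: "('n::finite \<Rightarrow> nat) set"
  assumes "\<And>a b. a \<in> A \<Longrightarrow> b \<in> A \<Longrightarrow> a \<le> b \<Longrightarrow> a = b"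
  shows "finite A"
proof -
  have "finite ((\<lambda>a. restrict a UNIV) ` A)"
    by (rule finite_restrict_antichain) (use assms in \<open>auto simp: le_fun_def\<close>)
  then show ?thesis by (simp add: restrict_UNIV)
qed

definition mins :: "('n::finite \<Rightarrow> nat) set \<Rightarrow> ('n \<Rightarrow> nat) set" where
  "mins S = {s \<in> S. \<forall>t\<in>S. t \<le> s \<longrightarrow> t = s}"

lemma finite_mins: "finite (mins S)"
  by (rule finite_antichain) (auto simp: mins_def)

lemma mins_below:
  assumes "s \<in> S" shows "\<exists>m\<in>mins S. m \<le> s"
proof -
  obtain m where m: "m \<in> S" "m \<le> s"
    and least: "\<And>t. t \<in> S \<Longrightarrow> t \<le> s \<Longrightarrow> sum m UNIV \<le> sum t UNIV"
    using ex_has_least_nat[of "\<lambda>t. t \<in> S \<and> t \<le> s" s "\<lambda>t. sum t UNIV"] assms by auto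
  have "t = m" if "t \<in> S" "t \<le> m" for t
  proof (rule ccontr)
    assume "t \<noteq> m"
    with \<open>t \<le> m\<close> obtain i where "t i < m i" by (auto simp: le_fun_def fun_eq_iff order_less_le)
    with \<open>t \<le> m\<close> have "sum t UNIV < sum m UNIV"
      by (intro sum_strict_mono_ex1) (auto simp: le_fun_def)
    with least[of t] that m(2) show False by (meson order_trans not_le)
  qed
  then show ?thesis using m by (auto simp: mins_def)
qed

lemma newton_mins: "newton (mins S) = newton S"
proof (rule subset_antisym)
  show "newton (mins S) \<subseteq> newton S" by (rule newton_mono) (auto simp: mins_def)
  show "newton S \<subseteq> newton (mins S)"
  proof (rule newton_subsetI, rule image_subsetI)
    fix s assume "s \<in> S"
    then obtain m where m: "m \<in> mins S" "m \<le> s" using mins_below by blast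
    have "emb s - emb m \<in> orthant" using m(2) by (auto simp: orthant_def emb_def le_fun_def)
    from newton_add_orthant[OF emb_in_newton[OF m(1)] this]
    show "emb s \<in> newton (mins S)" by simp
  qed
qed

lemma vert_mins: "vert S = vert (mins S)"
  by (rule vert_cong) (simp add: newton_mins)

lemma newton_vert: "newton (vert S) = newton S"
  using newton_vert_of_finite[OF finite_mins] by (simp add: newton_mins flip: vert_mins)

lemma finite_vert: "finite (vert S)"
  using vert_subset finite_mins by (metis finite_subset vert_mins)

lemma vert_eq_iff: "vert S = vert T \<longleftrightarrow> newton S = newton T"
  using vert_cong newton_vert by metis

lemma vert_vert: "vert (vert S) = vert S"
  by (simp add: vert_eq_iff newton_vert)

lemma vert_nonempty:
  assumes "S \<noteq> {}" shows "vert S \<noteq> {}"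
proof
  assume "vert S = {}"
  from assms obtain s where "s \<in> S" by blast
  then have "emb s \<in> newton (vert S)" by (simp add: newton_vert emb_in_newton)
  with \<open>vert S = {}\<close> show False by (simp add: newton_def)
qed

lemma VB_frac_le_one_iff:
  "VB_frac_le (vert A, vert B) (VB_one, VB_one) \<longleftrightarrow> emb ` A \<subseteq> newton B"
proof -
  have mult_one: "VB_mult X VB_one = vert X" for X :: "('n::finite \<Rightarrow> nat) set"
    unfolding VB_mult_def VB_one_def by simp
  have "VB_frac_le (vert A, vert B) (VB_one, VB_one) \<longleftrightarrow> vert (vert A \<union> vert B) = vert (vert B)"
    by (simp add: VB_frac_le_def VB_add_def mult_one vert_vert)
  also have "\<dots> \<longleftrightarrow> emb ` vert A \<subseteq> newton (vert B)"
    by (simp add: vert_eq_iff newton_Un_eq_iff)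
  also have "\<dots> \<longleftrightarrow> emb ` A \<subseteq> newton B"
    by (simp flip: newton_subset_iff add: newton_vert)
  finally show ?thesis .
qed

lemma newton_set_plus_extreme_left:
  assumes w: "emb w extreme_point_of newton (A + B)"
    and x: "x \<in> newton A" and y: "y \<in> newton B" and xy: "x + y = emb w"
  shows "x extreme_point_of newton A"
  unfolding extreme_point_of_def
proof (intro conjI ballI x)
  fix a b assume a: "a \<in> newton A" and b: "b \<in> newton A"
  show "x \<notin> open_segment a b"
  proof
    assume "x \<in> open_segment a b"
    then have "y + x \<in> open_segment (y + a) (y + b)" by simp
    then have "emb w \<in> open_segment (a + y) (b + y)" using xy by (simp add: add.commute)
    with w newton_set_plus[OF a y] newton_set_plus[OF b y] show False
      unfolding extreme_point_of_def by blast
  qed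
qed

lemma newton_set_plus_extreme_right:
  assumes "emb w extreme_point_of newton (A + B)"
    and "x \<in> newton A" "y \<in> newton B" "x + y = emb w"
  shows "y extreme_point_of newton B"
  using newton_set_plus_extreme_left[of w B A y x] assms by (simp add: add.commute)

lemma newton_set_plus_extreme_unique:
  assumes w: "emb w extreme_point_of newton (A + B)"
    and x: "x \<in> newton A" "x' \<in> newton A" and y: "y \<in> newton B" "y' \<in> newton B"
    and xy: "x + y = emb w" "x' + y' = emb w"
  shows "x = x'"
proof -
  have "midpoint (x + y') (x' + y) = midpoint (x + y) (x' + y')"
    by (simp add: midpoint_def algebra_simps)
  then have "emb w = midpoint (x + y') (x' + y)" using xy by simp
  then have "x + y' = x' + y"
    using w newton_set_plus[OF x(1) y(2)] newton_set_plus[OF x(2) y(1)]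
    by (metis extreme_point_of_def midpoint_in_open_segment)
  show ?thesis unfolding vec_eq_iff
  proof
    fix i
    have "x $ i + y' $ i = x' $ i + y $ i" "x $ i + y $ i = x' $ i + y' $ i"
      using \<open>x + y' = x' + y\<close> xy by (metis vector_add_component)+
    then show "x $ i = x' $ i" by linarith
  qed
qed

lemma extreme_point_scaled_sum_eq:
  fixes a b :: "'a::real_vector"
  assumes ext: "(real n *\<^sub>R a + b) extreme_point_of S"
    and a: "real (Suc n) *\<^sub>R a \<in> S" and b: "real (Suc n) *\<^sub>R b \<in> S" and "n > 0"
  shows "a = b"
proof (rule ccontr)
  assume "a \<noteq> b"
  then have ne: "real (Suc n) *\<^sub>R a \<noteq> real (Suc n) *\<^sub>R b" by simp
  define u where "u = 1 / real (Suc n)"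
  have u: "0 < u" "u < 1" using \<open>n > 0\<close> by (auto simp: u_def)
  have "(1 - u) * real (Suc n) = real n" "u * real (Suc n) = 1" by (simp_all add: u_def field_simps)
  then have "real n *\<^sub>R a + b = (1 - u) *\<^sub>R (real (Suc n) *\<^sub>R a) + u *\<^sub>R (real (Suc n) *\<^sub>R b)"
    by simp
  then have "real n *\<^sub>R a + b \<in> open_segment (real (Suc n) *\<^sub>R a) (real (Suc n) *\<^sub>R b)"
    using ne u unfolding in_segment by blast
  with ext a b show False unfolding extreme_point_of_def by blast
qed

lemma vert_set_plus_split:
  assumes "v \<in> vert (A + B)" shows "\<exists>a\<in>vert A. \<exists>b\<in>vert B. v = a + b"
proof -
  obtain a b where ab: "a \<in> A" "b \<in> B" "v = a + b"
    using assms vert_subset by (blast elim: set_plus_elim)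
  have ext: "emb v extreme_point_of newton (A + B)" using assms by (simp add: vert_def)
  have "emb a + emb b = emb v" by (simp add: ab(3) emb_add)
  with ext emb_in_newton[OF ab(1)] emb_in_newton[OF ab(2)] have "a \<in> vert A" "b \<in> vert B"
    unfolding vert_def
    by (blast intro: newton_set_plus_extreme_left newton_set_plus_extreme_right)+
  with ab(3) show ?thesis by blast
qed

section \<open>Multivariate power series\<close>

lemma fun_diff_le: "(e :: 'n \<Rightarrow> nat) - a \<le> e"
  and fun_le_add: "(a :: 'n \<Rightarrow> nat) \<le> a + b"
  by (simp_all add: le_fun_def)

lemma fun_add_diff_inverse: "(a :: 'n \<Rightarrow> nat) \<le> e \<Longrightarrow> a + (e - a) = e"
  and fun_diff_diff_cancel: "(a :: 'n \<Rightarrow> nat) \<le> e \<Longrightarrow> e - (e - a) = a"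
  and fun_diff_diff: "(a :: 'n \<Rightarrow> nat) \<le> c \<Longrightarrow> e - a - (c - a) = e - c"
  by (auto simp: le_fun_def fun_eq_iff)

lemma fun_diff_mono: "(c :: 'n \<Rightarrow> nat) \<le> e \<Longrightarrow> c - a \<le> e - a"
  and fun_le_diff_iff: "(a :: 'n \<Rightarrow> nat) \<le> e \<Longrightarrow> b \<le> e - a \<longleftrightarrow> a + b \<le> e"
  unfolding le_fun_def by (simp_all add: diff_le_mono le_diff_conv2 add.commute)

lemma finite_le_fun: "finite {a :: 'n::finite \<Rightarrow> nat. a \<le> e}"
proof -
  have "{a :: 'n \<Rightarrow> nat. a \<le> e} \<subseteq> PiE UNIV (\<lambda>i. {..e i})"
    by (auto simp: le_fun_def PiE_def Pi_def)
  then show ?thesis by (rule finite_subset) (simp add: finite_PiE)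
qed

lemma ps_mult_eq: "ps_mult f g e = (\<Sum>a | a \<le> e. f a * g (e - a))"
  unfolding ps_mult_def by (simp add: le_fun_def fun_diff_def)

lemma ps_mult_commute: "ps_mult f g = ps_mult g f"
proof
  fix e
  show "ps_mult f g e = ps_mult g f e"
    unfolding ps_mult_eq
    by (rule sum.reindex_bij_witness[of _ "\<lambda>a. e - a" "\<lambda>a. e - a"])
       (auto simp: fun_diff_le fun_diff_diff_cancel mult.commute)
qed

lemma ps_mult_assoc: "ps_mult (ps_mult f g) h = ps_mult f (ps_mult g h)"
proof
  fix e
  have "ps_mult (ps_mult f g) h e
      = (\<Sum>(c, a) \<in> Sigma {c. c \<le> e} (\<lambda>c. {a. a \<le> c}). f a * g (c - a) * h (e - c))"
    unfolding ps_mult_eq sum_distrib_right by (rule sum.Sigma) (auto intro: finite_le_fun)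
  also have "\<dots> = (\<Sum>(a, b) \<in> Sigma {a. a \<le> e} (\<lambda>a. {b. b \<le> e - a}). f a * g b * h (e - a - b))"
    by (rule sum.reindex_bij_witness[of _ "\<lambda>(a, b). (a + b, a)" "\<lambda>(c, a). (a, c - a)"])
       (auto simp: fun_add_diff_inverse fun_diff_diff fun_diff_mono fun_le_diff_iff fun_le_add
         intro: order_trans)
  also have "\<dots> = ps_mult f (ps_mult g h) e"
    unfolding ps_mult_eq sum_distrib_left
    by (subst sum.Sigma) (auto intro: finite_le_fun simp: mult.assoc)
  finally show "ps_mult (ps_mult f g) h e = ps_mult f (ps_mult g h) e" .
qed

lemma ps_mult_const: "ps_mult (ps_const c) f = (\<lambda>e. c * f e)"
proof
  fix e
  have "ps_mult (ps_const c) f e = (\<Sum>a | a \<le> e. if a = 0 then c * f (e - a) else 0)"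
    unfolding ps_mult_eq ps_const_def by (intro sum.cong) (auto simp: zero_fun_def)
  also have "\<dots> = c * f e" by (simp add: finite_le_fun)
  finally show "ps_mult (ps_const c) f e = c * f e" .
qed

text \<open>Coefficient functions already carry the pointwise ring structure, so the Cauchy product
  lives on a copy of the type; this also provides the fraction field \<open>('n, 'k) ps fract\<close>.\<close>

datatype ('n, 'k) ps = PS (cf: "('n, 'k) mps")

instantiation ps :: (finite, field) comm_ring_1
begin
definition "0 = PS ps_zero"
definition "1 = PS (ps_const 1)"
definition "f + g = PS (ps_add (cf f) (cf g))"
definition "- f = PS (\<lambda>e. - cf f e)"
definition "f - g = PS (\<lambda>e. cf f e - cf g e)"
definition "f * g = PS (ps_mult (cf f) (cf g))"
instance
proof
  fix f g h :: "('a, 'b) ps"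
  show "f + g + h = f + (g + h)" by (simp add: plus_ps_def ps_add_def add.assoc)
  show "f + g = g + f" by (simp add: plus_ps_def ps_add_def add.commute)
  show "0 + f = f" by (simp add: plus_ps_def zero_ps_def ps_add_def ps_zero_def)
  show "- f + f = 0" by (simp add: plus_ps_def uminus_ps_def zero_ps_def ps_add_def ps_zero_def)
  show "f - g = f + - g" by (simp add: plus_ps_def uminus_ps_def minus_ps_def ps_add_def)
  show "f * g * h = f * (g * h)" by (simp add: times_ps_def ps_mult_assoc)
  show "f * g = g * f" by (simp add: times_ps_def ps_mult_commute)
  show "1 * f = f" by (simp add: times_ps_def one_ps_def ps_mult_const)
  show "(f + g) * h = f * h + g * h"
    by (simp add: times_ps_def plus_ps_def ps_add_def ps_mult_eq sum.distrib algebra_simps fun_eq_iff)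
  show "(0 :: ('a, 'b) ps) \<noteq> 1"
    by (auto simp: zero_ps_def one_ps_def ps_zero_def ps_const_def fun_eq_iff)
qed
end

definition const_ps :: "'k::field \<Rightarrow> ('n::finite, 'k) ps" where
  "const_ps c = PS (ps_const c)"

lemma cf_0 [simp]: "cf 0 e = 0"
  and cf_1: "cf 1 e = (if e = 0 then 1 else 0)"
  and cf_const_ps: "cf (const_ps c) e = (if e = 0 then c else 0)"
  and cf_add [simp]: "cf (f + g) e = cf f e + cf g e"
  and cf_uminus [simp]: "cf (- f) e = - cf f e"
  and cf_diff [simp]: "cf (f - g) e = cf f e - cf g e"
  and cf_mult: "cf (f * g) e = (\<Sum>a | a \<le> e. cf f a * cf g (e - a))"
  by (simp_all add: zero_ps_def one_ps_def plus_ps_def uminus_ps_def minus_ps_def times_ps_def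
      ps_zero_def ps_const_def ps_add_def ps_mult_eq const_ps_def zero_fun_def)

lemma cf_times_eq: "cf (f * g) = ps_mult (cf f) (cf g)"
  and cf_plus_eq: "cf (f + g) = ps_add (cf f) (cf g)"
  and PS_eq_0_iff: "PS h = 0 \<longleftrightarrow> h = ps_zero"
  by (simp_all add: times_ps_def plus_ps_def zero_ps_def)

lemma cf_const_mult [simp]: "cf (const_ps c * f) e = c * cf f e"
  by (simp add: times_ps_def const_ps_def ps_mult_const)

lemma ps_eq_iff: "f = g \<longleftrightarrow> (\<forall>e. cf f e = cf g e)"
  by (cases f, cases g) (simp add: fun_eq_iff)

lemma const_ps_add: "const_ps (c + d) = const_ps c + const_ps d"
  and const_ps_mult: "const_ps (c * d) = const_ps c * const_ps d"
  and const_ps_zero: "const_ps 0 = 0"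
  and const_ps_one: "const_ps 1 = 1"
  by (simp_all add: ps_eq_iff cf_const_ps cf_1)

definition supp :: "('n::finite, 'k::field) ps \<Rightarrow> ('n \<Rightarrow> nat) set" where
  "supp f = {e. cf f e \<noteq> 0}"

text \<open>In the paper's notation, \<open>dominated f g\<close> says \<open>trop f \<le> trop g\<close>.\<close>

definition dominated :: "('n::finite, 'k::field) ps \<Rightarrow> ('n, 'k) ps \<Rightarrow> bool" where
  "dominated f g \<longleftrightarrow> emb ` supp f \<subseteq> newton (supp g)"

lemma dominated_refl: "dominated f f"
  unfolding dominated_def by (auto intro: emb_in_newton)

lemma supp_eq_empty_iff: "supp f = {} \<longleftrightarrow> f = 0"
  by (auto simp: supp_def ps_eq_iff)

lemma supp_1: "supp 1 = {0}"
  by (simp add: supp_def cf_1)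

lemma supp_mult_subset: "supp (f * g) \<subseteq> supp f + supp g"
proof
  fix v assume "v \<in> supp (f * g)"
  then obtain a where "a \<le> v" "cf f a * cf g (v - a) \<noteq> 0"
    unfolding supp_def cf_mult by (auto elim: sum.not_neutral_contains_not_neutral)
  then have "a \<in> supp f" "v - a \<in> supp g" "v = a + (v - a)"
    by (simp_all add: supp_def fun_add_diff_inverse)
  then show "v \<in> supp f + supp g" by (metis set_plus_intro)
qed

lemma cf_mult_at_vertex:
  assumes v: "emb (a + b) extreme_point_of newton (supp G + supp G')"
    and a: "emb a \<in> newton (supp G)" and b: "emb b \<in> newton (supp G')"
    and f: "dominated f G" and f': "dominated f' G'"
  shows "cf (f * f') (a + b) = cf f a * cf f' b"
proof -
  have zero: "cf f c * cf f' (a + b - c) = 0" if "c \<le> a + b" "c \<noteq> a" for c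
  proof (rule ccontr)
    assume "cf f c * cf f' (a + b - c) \<noteq> 0"
    then have "emb c \<in> newton (supp G)" "emb (a + b - c) \<in> newton (supp G')"
      using f f' by (auto simp: dominated_def supp_def)
    moreover have "emb c + emb (a + b - c) = emb (a + b)"
      using that(1) by (simp add: fun_add_diff_inverse flip: emb_add)
    moreover have "emb a + emb b = emb (a + b)" by (simp add: emb_add)
    ultimately have "emb c = emb a" using newton_set_plus_extreme_unique[OF v _ a _ b] by blast
    with inj_emb that(2) show False by (auto dest: injD)
  qed
  have "cf (f * f') (a + b) = cf f a * cf f' (a + b - a)"
    unfolding cf_mult
    by (subst sum.remove[where x = a]) (auto simp: finite_le_fun fun_le_add zero intro: sum.neutral)
  then show ?thesis by simp
qed

lemma vert_supp_set_plus_subset: "vert (supp f + supp g) \<subseteq> supp (f * g)"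
proof
  fix v assume v: "v \<in> vert (supp f + supp g)"
  then obtain a b where ab: "a \<in> vert (supp f)" "b \<in> vert (supp g)" "v = a + b"
    using vert_set_plus_split by blast
  then have "a \<in> supp f" "b \<in> supp g" using vert_subset by blast+
  moreover have "cf (f * g) v = cf f a * cf g b"
    unfolding ab(3)
  proof (rule cf_mult_at_vertex)
    show "emb (a + b) extreme_point_of newton (supp f + supp g)" using v ab(3) by (simp add: vert_def)
  qed (use calculation in \<open>simp_all add: emb_in_newton dominated_refl\<close>)
  ultimately show "v \<in> supp (f * g)" by (simp add: supp_def)
qed

lemma newton_supp_mult: "newton (supp (f * g)) = newton (supp f + supp g)"
proof (rule subset_antisym)
  show "newton (supp (f * g)) \<subseteq> newton (supp f + supp g)"
    by (rule newton_mono[OF supp_mult_subset])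
  show "newton (supp f + supp g) \<subseteq> newton (supp (f * g))"
    using newton_mono[OF vert_supp_set_plus_subset] by (simp add: newton_vert)
qed

lemma vert_supp_mult: "vert (supp (f * g)) = vert (supp f + supp g)"
  by (rule vert_cong[OF newton_supp_mult])

instance ps :: (finite, field) idom
proof
  fix f g :: "('a, 'b) ps"
  assume "f \<noteq> 0" "g \<noteq> 0"
  then obtain a b where "a \<in> supp f" "b \<in> supp g" by (metis supp_eq_empty_iff ex_in_conv)
  then have "supp f + supp g \<noteq> {}" using set_plus_intro by blast
  then have "vert (supp f + supp g) \<noteq> {}" by (rule vert_nonempty)
  then show "f * g \<noteq> 0"
    using vert_supp_set_plus_subset supp_eq_empty_iff by blast
qed

lemma dominated_add: "dominated f g \<Longrightarrow> dominated f' g \<Longrightarrow> dominated (f + f') g"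
  and dominated_diff: "dominated f g \<Longrightarrow> dominated f' g \<Longrightarrow> dominated (f - f') g"
proof -
  have "supp (f + f') \<subseteq> supp f \<union> supp f'" "supp (f - f') \<subseteq> supp f \<union> supp f'"
    by (auto simp: supp_def)
  then show "dominated f g \<Longrightarrow> dominated f' g \<Longrightarrow> dominated (f + f') g"
    and "dominated f g \<Longrightarrow> dominated f' g \<Longrightarrow> dominated (f - f') g"
    unfolding dominated_def by blast+
qed

lemma dominated_uminus: "dominated f g \<Longrightarrow> dominated (- f) g"
  unfolding dominated_def supp_def by simp

lemma dominated_const_mult: "dominated f g \<Longrightarrow> dominated (const_ps c * f) g"
  unfolding dominated_def supp_def by auto

lemma dominated_const_one: "dominated (const_ps c) 1"
  unfolding dominated_def supp_1 by (auto simp: supp_def cf_const_ps intro: emb_in_newton)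

lemma dominated_mult:
  assumes "dominated f g" "dominated f' g'" shows "dominated (f * f') (g * g')"
  unfolding dominated_def newton_supp_mult
proof (rule image_subsetI)
  fix v assume "v \<in> supp (f * f')"
  then obtain a b where ab: "a \<in> supp f" "b \<in> supp f'" "v = a + b"
    using supp_mult_subset by (blast elim: set_plus_elim)
  with assms have "emb a \<in> newton (supp g)" "emb b \<in> newton (supp g')"
    unfolding dominated_def by blast+
  then show "emb v \<in> newton (supp g + supp g')"
    unfolding ab(3) emb_add by (rule newton_set_plus)
qed

lemma dominated_prod:
  assumes "finite W" "\<And>w. w \<in> W \<Longrightarrow> dominated (h w) g"
  shows "dominated (\<Prod>w\<in>W. h w) (g ^ card W)"
  using assms by (induction W rule: finite_induct) (simp_all add: dominated_refl dominated_mult)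

lemma dominated_if_vert_subset: "vert (supp g) \<subseteq> supp f \<Longrightarrow> dominated g f"
  unfolding dominated_def using newton_mono newton_vert emb_in_newton by blast

lemma emb_scale: "emb (\<lambda>i. n * a i) = real n *\<^sub>R emb a"
  by (simp add: emb_def vec_eq_iff)

lemma scaled_in_newton_power:
  assumes "b \<in> supp g" shows "emb (\<lambda>i. n * b i) \<in> newton (supp (g ^ n))"
proof (induction n)
  case 0
  then show ?case by (simp add: supp_1 emb_in_newton zero_fun_def)
next
  case (Suc n)
  have "emb (\<lambda>i. Suc n * b i) = emb (\<lambda>i. n * b i) + emb b" by (simp add: emb_def vec_eq_iff)
  moreover have "\<dots> \<in> newton (supp (g ^ n) + supp g)"
    by (rule newton_set_plus[OF Suc emb_in_newton[OF assms]])
  ultimately show ?case by (simp only: power_Suc2 newton_supp_mult)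
qed

lemma vert_power_scaled_eq:
  assumes v: "(\<lambda>i. n * a i) + y \<in> vert (supp (g ^ Suc n))"
    and a: "a \<in> supp g" and y: "y \<in> supp g" and "n > 0"
  shows "a = y"
proof -
  have "(real n *\<^sub>R emb a + emb y) extreme_point_of newton (supp (g ^ Suc n))"
    using v by (simp add: vert_def emb_add emb_scale)
  moreover have "real (Suc n) *\<^sub>R emb b \<in> newton (supp (g ^ Suc n))" if "b \<in> supp g" for b
    using scaled_in_newton_power[OF that, of "Suc n"] by (simp only: emb_scale)
  ultimately have "emb a = emb y"
    using extreme_point_scaled_sum_eq \<open>n > 0\<close> a y by blast
  then show ?thesis using inj_emb by (auto dest: injD)
qed

lemma cf_prod_at_vertex:
  assumes "finite W" "g \<noteq> 0" "\<And>w. w \<in> W \<Longrightarrow> dominated (h w) g"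
    and "v \<in> vert (supp (g ^ card W))"
  shows "\<exists>a\<in>vert (supp g). v = (\<lambda>i. card W * a i) \<and> cf (\<Prod>w\<in>W. h w) v = (\<Prod>w\<in>W. cf (h w) a)"
  using assms(1,3,4)
proof (induction W arbitrary: v rule: finite_induct)
  case empty
  have "v = 0" using empty.prems vert_subset[of "supp 1"] by (auto simp: supp_1)
  moreover obtain a where "a \<in> vert (supp g)"
    using vert_nonempty assms(2) by (metis supp_eq_empty_iff ex_in_conv)
  ultimately show ?case by (auto simp: cf_1 zero_fun_def)
next
  case (insert w W)
  define n where "n = card W"
  have card: "card (insert w W) = Suc n" using insert.hyps by (simp add: n_def)
  have v_vert: "v \<in> vert (supp (g ^ Suc n))" using insert.prems(2) by (simp only: card)
  then have v_split: "v \<in> vert (supp (g ^ n) + supp g)" unfolding power_Suc2 vert_supp_mult .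
  then obtain x y where x: "x \<in> vert (supp (g ^ n))" and y: "y \<in> vert (supp g)" and xy: "v = x + y"
    using vert_set_plus_split by blast
  have "\<exists>a\<in>vert (supp g). x = (\<lambda>i. n * a i) \<and> cf (\<Prod>w\<in>W. h w) x = (\<Prod>w\<in>W. cf (h w) a)"
    using insert.IH insert.prems(1) x unfolding n_def by blast
  then obtain a where a: "a \<in> vert (supp g)" "x = (\<lambda>i. n * a i)"
    and cf_x: "cf (\<Prod>w\<in>W. h w) x = (\<Prod>w\<in>W. cf (h w) a)"
    by blast
  have scaled: "x = (\<lambda>i. n * y i) \<and> (\<Prod>w\<in>W. cf (h w) a) = (\<Prod>w\<in>W. cf (h w) y)"
  proof (cases "n = 0")
    case True
    then show ?thesis using a insert.hyps(1) by (simp add: n_def)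
  next
    case False
    have "a = y"
      by (rule vert_power_scaled_eq[OF v_vert[unfolded xy a(2)]]) (use a(1) y vert_subset False in auto)
    then show ?thesis using a(2) by simp
  qed
  have "cf (\<Prod>w\<in>insert w W. h w) v = cf ((\<Prod>w\<in>W. h w) * h w) (x + y)"
    using insert.hyps by (simp add: xy mult.commute)
  also have "\<dots> = cf (\<Prod>w\<in>W. h w) x * cf (h w) y"
  proof (rule cf_mult_at_vertex)
    show "emb (x + y) extreme_point_of newton (supp (g ^ n) + supp g)"
      using v_split by (simp add: xy vert_def)
    show "emb x \<in> newton (supp (g ^ n))" "emb y \<in> newton (supp g)"
      using x y vert_subset by (blast intro: emb_in_newton)+
    show "dominated (\<Prod>w\<in>W. h w) (g ^ n)"
      unfolding n_def using insert by (intro dominated_prod) auto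
    show "dominated (h w) g" using insert.prems(1) by simp
  qed
  also have "\<dots> = (\<Prod>w\<in>insert w W. cf (h w) y)"
    using insert.hyps cf_x scaled by (simp add: mult.commute)
  finally have "cf (\<Prod>w\<in>insert w W. h w) v = (\<Prod>w\<in>insert w W. cf (h w) y)" .
  moreover have "v = (\<lambda>i. card (insert w W) * y i)" using xy scaled card by (simp add: fun_eq_iff)
  ultimately show ?case using y by blast
qed

section \<open>The ring \<open>K((t))\<degree>\<close>\<close>

type_synonym ('n, 'k) laurent = "(('n, 'k) mps \<times> ('n, 'k) mps) set"

text \<open>\<open>to_fract\<close> identifies the quotient construction of \<open>K((t))\<close> in \<open>laurent_set\<close> with the
  library's fraction field of the series ring, where ring identities are proved.\<close>

definition pair_fract :: "('n::finite, 'k::field) mps \<times> ('n, 'k) mps \<Rightarrow> ('n, 'k) ps fract" where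
  "pair_fract p = Fract (PS (fst p)) (PS (snd p))"

definition frac_of :: "('n::finite, 'k::field) ps \<Rightarrow> ('n, 'k) ps \<Rightarrow> ('n, 'k) laurent" where
  "frac_of f g = frac_class (cf f, cf g)"

definition to_fract :: "('n::finite, 'k::field) laurent \<Rightarrow> ('n, 'k) ps fract" where
  "to_fract Q = pair_fract (frac_rep Q)"

lemma frac_rel_iff: "frac_rel p q \<longleftrightarrow> PS (snd p) \<noteq> 0 \<and> PS (snd q) \<noteq> 0 \<and> pair_fract p = pair_fract q"
proof -
  have "ps_mult (fst p) (snd q) = ps_mult (fst q) (snd p) \<longleftrightarrow> PS (fst p) * PS (snd q) = PS (fst q) * PS (snd p)"
    by (simp add: times_ps_def)
  then show ?thesis
    unfolding frac_rel_def pair_fract_def by (auto simp: PS_eq_0_iff eq_fract)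
qed

lemma mem_frac_of_iff: "p \<in> frac_of f g \<longleftrightarrow> g \<noteq> 0 \<and> PS (snd p) \<noteq> 0 \<and> pair_fract p = Fract f g"
  by (auto simp: frac_of_def frac_class_def frac_rel_iff pair_fract_def)

lemma frac_of_eq_iff:
  assumes "g \<noteq> 0" "g' \<noteq> 0" shows "frac_of f g = frac_of f' g' \<longleftrightarrow> Fract f g = Fract f' g'"
proof
  assume "frac_of f g = frac_of f' g'"
  moreover have "(cf f, cf g) \<in> frac_of f g" using assms by (simp add: mem_frac_of_iff pair_fract_def)
  ultimately show "Fract f g = Fract f' g'" by (simp add: mem_frac_of_iff pair_fract_def)
qed (use assms in \<open>auto simp: mem_frac_of_iff\<close>)

lemma frac_rep_frac_of:
  assumes "g \<noteq> 0"
  obtains f' g' where "frac_rep (frac_of f g) = (cf f', cf g')" "g' \<noteq> 0" "Fract f' g' = Fract f g"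
proof -
  have "(cf f, cf g) \<in> frac_of f g" using assms by (simp add: mem_frac_of_iff pair_fract_def)
  then have "frac_rep (frac_of f g) \<in> frac_of f g" unfolding frac_rep_def by (rule someI)
  then show ?thesis
    using that[of "PS (fst (frac_rep (frac_of f g)))" "PS (snd (frac_rep (frac_of f g)))"]
    by (simp add: mem_frac_of_iff pair_fract_def)
qed

lemma to_fract_frac_of:
  assumes "g \<noteq> 0" shows "to_fract (frac_of f g) = Fract f g"
proof -
  obtain f' g' where "frac_rep (frac_of f g) = (cf f', cf g')" "g' \<noteq> 0" "Fract f' g' = Fract f g"
    by (rule frac_rep_frac_of[OF assms])
  then show ?thesis by (simp add: to_fract_def pair_fract_def)
qed

lemma laurent_set_eq:
  "(laurent_set :: ('n::finite, 'k::field) laurent set) = {frac_of f g | f g. g \<noteq> 0}"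
  unfolding laurent_set_def
proof (intro equalityI subsetI)
  fix Q :: "('n, 'k) laurent"
  assume "Q \<in> {frac_class p | p. snd p \<noteq> ps_zero}"
  then obtain p where "Q = frac_class p" "snd p \<noteq> ps_zero" by blast
  then have "Q = frac_of (PS (fst p)) (PS (snd p))" "PS (snd p) \<noteq> 0"
    by (simp_all add: frac_of_def PS_eq_0_iff)
  then show "Q \<in> {frac_of f g | f g. g \<noteq> 0}" by blast
next
  fix Q :: "('n, 'k) laurent"
  assume "Q \<in> {frac_of f g | f g. g \<noteq> 0}"
  then obtain f g where "Q = frac_of f g" "g \<noteq> 0" by blast
  then have "Q = frac_class (cf f, cf g)" "snd (cf f, cf g) \<noteq> ps_zero"
    by (simp_all add: frac_of_def flip: PS_eq_0_iff)
  then show "Q \<in> {frac_class p | p. snd p \<noteq> ps_zero}" by blast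
qed

lemma inj_on_to_fract: "inj_on (to_fract :: ('n::finite, 'k::field) laurent \<Rightarrow> _) laurent_set"
proof (rule inj_onI)
  fix Q R :: "('n, 'k) laurent" assume "Q \<in> laurent_set" "R \<in> laurent_set" and eq: "to_fract Q = to_fract R"
  then obtain f g f' g' where "Q = frac_of f g" "g \<noteq> 0" "R = frac_of f' g'" "g' \<noteq> 0"
    unfolding laurent_set_eq by blast
  with eq show "Q = R" by (simp add: to_fract_frac_of frac_of_eq_iff)
qed

lemma frac_add_frac_of:
  assumes "g \<noteq> 0" "g' \<noteq> 0"
  shows "frac_add (frac_of f g) (frac_of f' g') = frac_of (f * g' + f' * g) (g * g')"
proof -
  obtain p q where p: "frac_rep (frac_of f g) = (cf p, cf q)" "q \<noteq> 0" "Fract p q = Fract f g"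
    by (rule frac_rep_frac_of[OF assms(1)])
  obtain r s where r: "frac_rep (frac_of f' g') = (cf r, cf s)" "s \<noteq> 0" "Fract r s = Fract f' g'"
    by (rule frac_rep_frac_of[OF assms(2)])
  have "frac_add (frac_of f g) (frac_of f' g') = frac_of (p * s + r * q) (q * s)"
    unfolding frac_add_def p r by (simp add: frac_of_def cf_times_eq cf_plus_eq)
  also have "\<dots> = frac_of (f * g' + f' * g) (g * g')"
    using p r assms by (simp add: frac_of_eq_iff flip: add_fract)
  finally show ?thesis .
qed

lemma frac_mult_frac_of:
  assumes "g \<noteq> 0" "g' \<noteq> 0"
  shows "frac_mult (frac_of f g) (frac_of f' g') = frac_of (f * f') (g * g')"
proof -
  obtain p q where p: "frac_rep (frac_of f g) = (cf p, cf q)" "q \<noteq> 0" "Fract p q = Fract f g"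
    by (rule frac_rep_frac_of[OF assms(1)])
  obtain r s where r: "frac_rep (frac_of f' g') = (cf r, cf s)" "s \<noteq> 0" "Fract r s = Fract f' g'"
    by (rule frac_rep_frac_of[OF assms(2)])
  have "frac_mult (frac_of f g) (frac_of f' g') = frac_of (p * r) (q * s)"
    unfolding frac_mult_def p r by (simp add: frac_of_def cf_times_eq)
  also have "\<dots> = frac_of (f * f') (g * g')"
    using p r assms by (simp add: frac_of_eq_iff flip: mult_fract)
  finally show ?thesis .
qed

lemma frac_of_const_eq: "frac_of_const c = frac_of (const_ps c) 1"
  by (simp add: frac_of_const_def frac_of_def const_ps_def one_ps_def)

lemma Kcirc_set_eq:
  "(Kcirc_set :: ('n::finite, 'k::field) laurent set) = {frac_of f g | f g. g \<noteq> 0 \<and> dominated f g}"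
proof -
  have trop_le: "VB_frac_le (trop (fst p), trop (snd p)) (VB_one, VB_one)
      \<longleftrightarrow> dominated (PS (fst p)) (PS (snd p))" for p :: "('n::finite, 'k::field) mps \<times> ('n, 'k) mps"
    unfolding trop_def dominated_def VB_frac_le_one_iff by (simp add: supp_def)
  have frac_of_pair: "frac_of (PS (fst p)) (PS (snd p)) = frac_of f g" if "p \<in> frac_of f g" for p and f g :: "('n, 'k) ps"
    using that by (simp add: mem_frac_of_iff frac_of_eq_iff pair_fract_def)
  show ?thesis
  proof (intro equalityI subsetI)
    fix Q :: "('n, 'k) laurent" assume "Q \<in> Kcirc_set"
    then obtain f g p where "Q = frac_of f g" "g \<noteq> 0" "p \<in> Q"
      and "VB_frac_le (trop (fst p), trop (snd p)) (VB_one, VB_one)"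
      unfolding Kcirc_set_def laurent_set_eq by blast
    then show "Q \<in> {frac_of f g | f g. g \<noteq> 0 \<and> dominated f g}"
      using frac_of_pair[of p f g] trop_le[of p] by (auto simp: mem_frac_of_iff)
  next
    fix Q :: "('n, 'k) laurent" assume "Q \<in> {frac_of f g | f g. g \<noteq> 0 \<and> dominated f g}"
    then obtain f g where Q: "Q = frac_of f g" "g \<noteq> 0" "dominated f g" by blast
    then have "(cf f, cf g) \<in> Q" by (simp add: mem_frac_of_iff pair_fract_def)
    moreover have "VB_frac_le (trop (cf f), trop (cf g)) (VB_one, VB_one)"
      using Q(3) trop_le[of "(cf f, cf g)"] by simp
    ultimately show "Q \<in> Kcirc_set"
      unfolding Kcirc_set_def laurent_set_eq using Q(1,2) by force
  qed
qed

lemma frac_of_in_Kcirc: "g \<noteq> 0 \<Longrightarrow> dominated f g \<Longrightarrow> frac_of f g \<in> Kcirc_set"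
  unfolding Kcirc_set_eq by blast

lemma Kcirc_setE:
  assumes "Q \<in> Kcirc_set"
  obtains f g where "Q = frac_of f g" "g \<noteq> 0" "dominated f g"
  using assms unfolding Kcirc_set_eq by blast

lemma Kcirc_simps [simp]:
  "carrier Kcirc = Kcirc_set" "add Kcirc = frac_add" "mult Kcirc = frac_mult"
  "one Kcirc = frac_of_const 1" "zero Kcirc = frac_of_const 0"
  by (simp_all add: Kcirc_def)

lemma const_in_Kcirc: "frac_of_const c \<in> Kcirc_set"
  unfolding frac_of_const_eq by (rule frac_of_in_Kcirc) (simp_all add: dominated_const_one)

lemma to_fract_const: "to_fract (frac_of_const c) = Fract (const_ps c) 1"
  by (simp add: frac_of_const_eq to_fract_frac_of)

lemma Kcirc_add_closed:
  assumes "Q \<in> Kcirc_set" "R \<in> Kcirc_set"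
  shows "frac_add Q R \<in> Kcirc_set" "to_fract (frac_add Q R) = to_fract Q + to_fract R"
proof -
  obtain f g f' g' where Q: "Q = frac_of f g" "g \<noteq> 0" "dominated f g"
    and R: "R = frac_of f' g'" "g' \<noteq> 0" "dominated f' g'"
    using assms by (metis Kcirc_setE)
  have "dominated (f * g' + f' * g) (g * g')"
    using dominated_mult[OF Q(3) dominated_refl[of g']] dominated_mult[OF R(3) dominated_refl[of g]]
    by (simp add: dominated_add mult.commute)
  then show "frac_add Q R \<in> Kcirc_set" "to_fract (frac_add Q R) = to_fract Q + to_fract R"
    using Q R by (simp_all add: frac_add_frac_of frac_of_in_Kcirc to_fract_frac_of)
qed

lemma Kcirc_mult_closed:
  assumes "Q \<in> Kcirc_set" "R \<in> Kcirc_set"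
  shows "frac_mult Q R \<in> Kcirc_set" "to_fract (frac_mult Q R) = to_fract Q * to_fract R"
proof -
  obtain f g f' g' where Q: "Q = frac_of f g" "g \<noteq> 0" "dominated f g"
    and R: "R = frac_of f' g'" "g' \<noteq> 0" "dominated f' g'"
    using assms by (metis Kcirc_setE)
  then show "frac_mult Q R \<in> Kcirc_set" "to_fract (frac_mult Q R) = to_fract Q * to_fract R"
    by (simp_all add: frac_mult_frac_of frac_of_in_Kcirc to_fract_frac_of dominated_mult)
qed

lemma Kcirc_eqI: "Q \<in> Kcirc_set \<Longrightarrow> R \<in> Kcirc_set \<Longrightarrow> to_fract Q = to_fract R \<Longrightarrow> Q = R"
  using inj_on_to_fract by (auto simp: Kcirc_set_def dest: inj_onD)

lemma cring_Kcirc: "cring (Kcirc :: ('n::finite, 'k::field) laurent ring)"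
proof (rule cringI)
  note closed = Kcirc_add_closed Kcirc_mult_closed const_in_Kcirc
  note to_fract_0 = to_fract_const[of 0, simplified const_ps_zero Zero_fract_def[symmetric]]
  note to_fract_1 = to_fract_const[of 1, simplified const_ps_one One_fract_def[symmetric]]
  show "abelian_group (Kcirc :: ('n, 'k) laurent ring)"
  proof (rule abelian_groupI, simp_all add: closed)
    fix x y z :: "('n, 'k) laurent" assume "x \<in> Kcirc_set" "y \<in> Kcirc_set" "z \<in> Kcirc_set"
    then show "frac_add (frac_add x y) z = frac_add x (frac_add y z)"
      by (intro Kcirc_eqI) (simp_all add: closed add.assoc)
  next
    fix x y :: "('n, 'k) laurent" assume "x \<in> Kcirc_set" "y \<in> Kcirc_set"
    then show "frac_add x y = frac_add y x"
      by (intro Kcirc_eqI) (simp_all add: closed add.commute)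
  next
    fix x :: "('n, 'k) laurent" assume "x \<in> Kcirc_set"
    then show "frac_add (frac_of_const 0) x = x"
      by (intro Kcirc_eqI) (simp_all add: closed to_fract_0)
  next
    fix x :: "('n, 'k) laurent" assume "x \<in> Kcirc_set"
    then obtain f g where x: "x = frac_of f g" "g \<noteq> 0" "dominated f g" by (rule Kcirc_setE)
    then have y: "frac_of (- f) g \<in> Kcirc_set" by (simp add: frac_of_in_Kcirc dominated_uminus)
    have "to_fract x = Fract f g" using x by (simp add: to_fract_frac_of)
    with \<open>x \<in> Kcirc_set\<close> y x(2) have "frac_add (frac_of (- f) g) x = frac_of_const 0"
      by (intro Kcirc_eqI) (simp_all add: closed to_fract_0 to_fract_frac_of flip: minus_fract)
    with y show "\<exists>y\<in>Kcirc_set. frac_add y x = frac_of_const 0" by blast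
  qed
  show "comm_monoid (Kcirc :: ('n, 'k) laurent ring)"
  proof (rule comm_monoidI, simp_all add: closed)
    fix x y z :: "('n, 'k) laurent" assume "x \<in> Kcirc_set" "y \<in> Kcirc_set" "z \<in> Kcirc_set"
    then show "frac_mult (frac_mult x y) z = frac_mult x (frac_mult y z)"
      by (intro Kcirc_eqI) (simp_all add: closed mult.assoc)
  next
    fix x :: "('n, 'k) laurent" assume "x \<in> Kcirc_set"
    then show "frac_mult (frac_of_const 1) x = x"
      by (intro Kcirc_eqI) (simp_all add: closed to_fract_1)
  next
    fix x y :: "('n, 'k) laurent" assume "x \<in> Kcirc_set" "y \<in> Kcirc_set"
    then show "frac_mult x y = frac_mult y x"
      by (intro Kcirc_eqI) (simp_all add: closed mult.commute)
  qed
  fix x y z :: "('n, 'k) laurent" assume "x \<in> carrier Kcirc" "y \<in> carrier Kcirc" "z \<in> carrier Kcirc"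
  then show "(x \<oplus>\<^bsub>Kcirc\<^esub> y) \<otimes>\<^bsub>Kcirc\<^esub> z = x \<otimes>\<^bsub>Kcirc\<^esub> z \<oplus>\<^bsub>Kcirc\<^esub> y \<otimes>\<^bsub>Kcirc\<^esub> z"
    by (simp, intro Kcirc_eqI) (simp_all add: closed distrib_right)
qed

lemma field_type_ring: "field (type_ring :: 'k::field ring)"
proof -
  have "\<exists>y. x + y = 0" for x :: 'k by (rule exI[of _ "- x"]) simp
  moreover have "x \<noteq> 0 \<Longrightarrow> \<exists>y. x * y = 1" for x :: 'k by (rule exI[of _ "inverse x"]) simp
  ultimately show ?thesis
    unfolding type_ring_def by unfold_locales (auto simp: algebra_simps Units_def)
qed

lemma frac_of_const_hom: "frac_of_const \<in> ring_hom type_ring Kcirc"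
  by (rule ring_hom_memI)
     (simp_all add: type_ring_def frac_of_in_Kcirc dominated_const_one frac_of_const_eq
       frac_add_frac_of frac_mult_frac_of const_ps_add const_ps_mult)

section \<open>Residues modulo a maximal ideal\<close>

lemma (in cring) in_maximalideal_if_one_add_Units:
  assumes max: "maximalideal I R" and r: "r \<in> carrier R"
    and units: "\<And>s. s \<in> carrier R \<Longrightarrow> \<one> \<oplus> s \<otimes> r \<in> Units R"
  shows "r \<in> I"
proof (rule ccontr)
  interpret maximalideal I R by (rule max)
  assume "r \<notin> I"
  let ?J = "I <+>\<^bsub>R\<^esub> PIdl r"
  have J: "ideal ?J R" by (rule add_ideals[OF is_ideal cgenideal_ideal[OF r]])
  have zero_PIdl: "\<zero> \<in> PIdl r"
    by (rule additive_subgroup.zero_closed[OF ideal.axioms(1)[OF cgenideal_ideal[OF r]]])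
  have "I \<subseteq> ?J"
  proof
    fix i assume "i \<in> I"
    then have "i = i \<oplus> \<zero>" by (simp add: Icarr)
    with \<open>i \<in> I\<close> zero_PIdl show "i \<in> ?J" unfolding set_add_def' by blast
  qed
  moreover have "r \<in> ?J"
  proof -
    have "r = \<zero> \<oplus> r" using r by simp
    with additive_subgroup.zero_closed[OF is_additive_subgroup] cgenideal_self[OF r]
    show ?thesis unfolding set_add_def' by blast
  qed
  ultimately have "?J = carrier R"
    using I_maximal[OF J] additive_subgroup.a_subset[OF ideal.axioms(1)[OF J]] \<open>r \<notin> I\<close>
    by blast
  then have "\<one> \<in> ?J" by simp
  then obtain i p where "i \<in> I" "p \<in> PIdl r" "\<one> = i \<oplus> p" unfolding set_add_def' by blast
  then obtain x where ix: "i \<in> I" "x \<in> carrier R" "\<one> = i \<oplus> x \<otimes> r"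
    unfolding cgenideal_def by blast
  moreover have "i \<in> carrier R" using ix(1) by (rule Icarr)
  ultimately have "i = \<one> \<oplus> (\<ominus> x) \<otimes> r" using r by algebra
  then have "i \<in> Units R" using units ix(2) by simp
  then have "\<one> \<in> I" using I_l_closed[OF ix(1), of "inv i"] ix(1) by simp
  then show False using one_imp_carrier I_notcarr by simp
qed

definition strictly_dominated :: "('n::finite, 'k::field) ps \<Rightarrow> ('n, 'k) ps \<Rightarrow> bool" where
  "strictly_dominated f g \<longleftrightarrow> dominated f g \<and> (\<forall>a\<in>vert (supp g). cf f a = 0)"

lemma vert_subset_supp_add_strictly_dominated:
  assumes "dominated h' G'" "strictly_dominated H G"
  shows "vert (supp (G' * G)) \<subseteq> supp (G' * G + h' * H)"
proof
  fix v assume v: "v \<in> vert (supp (G' * G))"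
  then have "v \<in> vert (supp G' + supp G)" by (simp add: vert_supp_mult)
  then obtain b a where b: "b \<in> vert (supp G')" and a: "a \<in> vert (supp G)" and v_eq: "v = b + a"
    using vert_set_plus_split by blast
  have "cf (h' * H) v = cf h' b * cf H a"
    unfolding v_eq
  proof (rule cf_mult_at_vertex)
    show "emb (b + a) extreme_point_of newton (supp G' + supp G)"
      using v v_eq by (simp add: vert_def newton_supp_mult)
    show "emb b \<in> newton (supp G')" "emb a \<in> newton (supp G)"
      using a b vert_subset emb_in_newton by blast+
  qed (use assms in \<open>simp_all add: strictly_dominated_def\<close>)
  also have "\<dots> = 0" using a assms(2) by (simp add: strictly_dominated_def)
  finally show "v \<in> supp (G' * G + h' * H)"
    using v vert_subset by (force simp: supp_def)
qed

lemma Kcirc_one_add_Units: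
  assumes G: "G \<noteq> 0" and H: "strictly_dominated H G" and s: "s \<in> Kcirc_set"
  shows "frac_add (frac_of_const 1) (frac_mult s (frac_of H G)) \<in> Units Kcirc"
proof -
  obtain h' G' where s_eq: "s = frac_of h' G'" and G': "G' \<noteq> 0" and h': "dominated h' G'"
    using s by (rule Kcirc_setE)
  define D where "D = G' * G"
  define N where "N = G' * G + h' * H"
  have D: "D \<noteq> 0" using G G' by (simp add: D_def)
  have vert_D: "vert (supp D) \<subseteq> supp N"
    unfolding D_def N_def by (rule vert_subset_supp_add_strictly_dominated[OF h' H])
  then have N: "N \<noteq> 0"
    using vert_nonempty D by (metis subset_empty supp_eq_empty_iff)
  have dom_N: "dominated N D"
    using dominated_mult[OF h' conjunct1[OF H[unfolded strictly_dominated_def]]]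
    by (simp add: N_def D_def dominated_add dominated_refl)
  have r: "frac_of H G \<in> Kcirc_set"
    using G H by (simp add: frac_of_in_Kcirc strictly_dominated_def)
  have ND: "frac_of N D \<in> Kcirc_set" by (rule frac_of_in_Kcirc[OF D dom_N])
  have unit: "frac_add (frac_of_const 1) (frac_mult s (frac_of H G)) = frac_of N D"
    using s r ND G G' D by (intro Kcirc_eqI)
      (simp_all add: Kcirc_add_closed Kcirc_mult_closed const_in_Kcirc to_fract_const
        to_fract_frac_of s_eq const_ps_one N_def D_def algebra_simps)
  have inv: "frac_of D N \<in> Kcirc_set" by (rule frac_of_in_Kcirc[OF N dominated_if_vert_subset[OF vert_D]])
  have "frac_mult (frac_of D N) (frac_of N D) = frac_of_const 1"
    "frac_mult (frac_of N D) (frac_of D N) = frac_of_const 1"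
    using D N by (simp_all add: frac_mult_frac_of frac_of_const_eq const_ps_one frac_of_eq_iff
      eq_fract mult.commute)
  with inv show ?thesis
    unfolding unit Units_def using ND by auto
qed

lemma strictly_dominated_in_maximalideal:
  assumes "maximalideal M Kcirc" "G \<noteq> 0" "strictly_dominated H G"
  shows "frac_of H G \<in> M"
proof (rule cring.in_maximalideal_if_one_add_Units[OF cring_Kcirc assms(1)])
  show "frac_of H G \<in> carrier Kcirc"
    using assms(2,3) by (simp add: frac_of_in_Kcirc strictly_dominated_def)
  show "\<one>\<^bsub>Kcirc\<^esub> \<oplus>\<^bsub>Kcirc\<^esub> s \<otimes>\<^bsub>Kcirc\<^esub> frac_of H G \<in> Units Kcirc" if "s \<in> carrier Kcirc" for s
    using Kcirc_one_add_Units[OF assms(2,3)] that by simp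
qed

lemma frac_of_prod_in_primeideal:
  assumes prime: "primeideal M Kcirc" and W: "finite W" and g: "g \<noteq> 0"
    and h: "\<And>w. w \<in> W \<Longrightarrow> dominated (h w) g"
    and M: "frac_of (\<Prod>w\<in>W. h w) (g ^ card W) \<in> M"
  shows "\<exists>w\<in>W. frac_of (h w) g \<in> M"
  using W h M
proof (induction W rule: finite_induct)
  case empty
  interpret primeideal M Kcirc by (rule prime)
  have "\<one>\<^bsub>Kcirc\<^esub> \<in> M" using empty.prems by (simp add: frac_of_const_eq const_ps_one)
  then show ?case using one_imp_carrier I_notcarr by simp
next
  case (insert w W)
  interpret primeideal M Kcirc by (rule prime)
  have "frac_of (\<Prod>w\<in>insert w W. h w) (g ^ card (insert w W))
      = frac_mult (frac_of (h w) g) (frac_of (\<Prod>w\<in>W. h w) (g ^ card W))"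
    using insert.hyps g by (simp add: frac_mult_frac_of)
  moreover have "frac_of (h w) g \<in> carrier Kcirc" "frac_of (\<Prod>w\<in>W. h w) (g ^ card W) \<in> carrier Kcirc"
    using insert g by (simp_all add: frac_of_in_Kcirc dominated_prod)
  ultimately have "frac_of (h w) g \<in> M \<or> frac_of (\<Prod>w\<in>W. h w) (g ^ card W) \<in> M"
    using I_prime insert.prems(2) by simp
  then show ?case using insert by blast
qed

lemma Kcirc_minus_frac_of:
  fixes f g f' g' :: "('n::finite, 'k::field) ps"
  assumes "g \<noteq> 0" "g' \<noteq> 0" "dominated f g" "dominated f' g'"
  shows "frac_of f g \<ominus>\<^bsub>Kcirc\<^esub> frac_of f' g' = frac_of (f * g' - f' * g) (g * g')"
proof -
  interpret cring "Kcirc :: ('n, 'k) laurent ring" by (rule cring_Kcirc)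
  have "\<ominus>\<^bsub>Kcirc\<^esub> frac_of f' g' = frac_of (- f') g'"
  proof (rule minus_equality)
    show "frac_of (- f') g' \<oplus>\<^bsub>Kcirc\<^esub> frac_of f' g' = \<zero>\<^bsub>Kcirc\<^esub>"
      using assms by (simp add: frac_add_frac_of frac_of_const_eq const_ps_zero frac_of_eq_iff eq_fract)
  qed (use assms in \<open>simp_all add: frac_of_in_Kcirc dominated_uminus\<close>)
  then show ?thesis using assms by (simp add: minus_eq frac_add_frac_of)
qed

lemma Kcirc_residue:
  assumes max: "maximalideal M Kcirc" and x: "x \<in> Kcirc_set"
  shows "\<exists>c. x \<ominus>\<^bsub>Kcirc\<^esub> frac_of_const c \<in> M"
proof -
  obtain f g where x_eq: "x = frac_of f g" and g: "g \<noteq> 0" and f: "dominated f g"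
    using x by (rule Kcirc_setE)
  define W where "W = vert (supp g)"
  define c where "c w = cf f w / cf g w" for w
  define h where "h w = f - const_ps (c w) * g" for w
  have W: "finite W" by (simp add: W_def finite_vert)
  have h_dom: "dominated (h w) g" for w
    unfolding h_def by (intro dominated_diff f dominated_const_mult dominated_refl)
  have h_vanish: "cf (h w) w = 0" if "w \<in> W" for w
  proof -
    have "cf g w \<noteq> 0" using that vert_subset by (auto simp: W_def supp_def)
    then show ?thesis by (simp add: h_def c_def)
  qed
  have residue: "x \<ominus>\<^bsub>Kcirc\<^esub> frac_of_const (c w) = frac_of (h w) g" for w
    using Kcirc_minus_frac_of[OF g one_neq_zero f dominated_const_one]
    by (simp add: x_eq frac_of_const_eq h_def)
  have "strictly_dominated (\<Prod>w\<in>W. h w) (g ^ card W)"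
    unfolding strictly_dominated_def
  proof
    show "dominated (\<Prod>w\<in>W. h w) (g ^ card W)" by (rule dominated_prod[OF W h_dom])
    show "\<forall>v\<in>vert (supp (g ^ card W)). cf (\<Prod>w\<in>W. h w) v = 0"
    proof
      fix v assume "v \<in> vert (supp (g ^ card W))"
      then have "\<exists>a\<in>vert (supp g). v = (\<lambda>i. card W * a i)
          \<and> cf (\<Prod>w\<in>W. h w) v = (\<Prod>w\<in>W. cf (h w) a)"
        by (intro cf_prod_at_vertex[OF W g]) (simp_all add: h_dom)
      then obtain a where "a \<in> W" "cf (\<Prod>w\<in>W. h w) v = (\<Prod>w\<in>W. cf (h w) a)"
        unfolding W_def[symmetric] by blast
      moreover have "(\<Prod>w\<in>W. cf (h w) a) = 0"
        by (rule prod_zero[OF W]) (use \<open>a \<in> W\<close> h_vanish in blast)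
      ultimately show "cf (\<Prod>w\<in>W. h w) v = 0" by simp
    qed
  qed
  then have "frac_of (\<Prod>w\<in>W. h w) (g ^ card W) \<in> M"
    using strictly_dominated_in_maximalideal[OF max] g by simp
  then obtain w where "frac_of (h w) g \<in> M"
    using frac_of_prod_in_primeideal[OF cring.maximalideal_prime[OF cring_Kcirc max] W g, of h] h_dom
    by blast
  then show ?thesis using residue by metis
qed

lemma Kcirc_Quot_eq_const_cosets:
  fixes M :: "('n::finite, 'k::field) laurent set"
  assumes max: "maximalideal M Kcirc"
  shows "(\<lambda>c. M +>\<^bsub>Kcirc\<^esub> frac_of_const c) ` UNIV = carrier (Kcirc Quot M)"
proof (intro equalityI subsetI)
  fix X assume "X \<in> carrier (Kcirc Quot M)"
  then obtain x where x: "x \<in> carrier Kcirc" and X: "X = M +>\<^bsub>Kcirc\<^esub> x"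
    by (auto simp: FactRing_def A_RCOSETS_def')
  interpret cring "Kcirc :: ('n, 'k) laurent ring" by (rule cring_Kcirc)
  interpret maximalideal M Kcirc by (rule max)
  obtain c where "x \<ominus>\<^bsub>Kcirc\<^esub> frac_of_const c \<in> M" using Kcirc_residue[OF max] x by auto
  then have "X = M +>\<^bsub>Kcirc\<^esub> frac_of_const c"
    using quotient_eq_iff_same_a_r_cos[OF is_ideal x, of "frac_of_const c"] X
    by (simp add: const_in_Kcirc)
  then show "X \<in> range (\<lambda>c. M +>\<^bsub>Kcirc\<^esub> frac_of_const c)" by simp
next
  fix X assume "X \<in> range (\<lambda>c. M +>\<^bsub>Kcirc\<^esub> frac_of_const c)"
  then show "X \<in> carrier (Kcirc Quot M)"
    using const_in_Kcirc by (auto simp: FactRing_def A_RCOSETS_def')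
qed

theorem corollary4p9:
  fixes M :: "(('n::finite, 'k::field_char_0) mps \<times> ('n, 'k) mps) set set"
  assumes "maximalideal M (Kcirc :: (('n, 'k) mps \<times> ('n, 'k) mps) set ring)"
  shows "(\<lambda>c. M +>\<^bsub>Kcirc\<^esub> frac_of_const c) \<in> ring_iso (type_ring :: 'k ring) (Kcirc Quot M)
         \<and> Kcirc Quot M \<simeq> (type_ring :: 'k ring)"
proof -
  interpret maximalideal M Kcirc by (rule assms)
  let ?h = "\<lambda>c. M +>\<^bsub>Kcirc\<^esub> (frac_of_const c :: ('n, 'k) laurent)"
  have hom: "?h \<in> ring_hom type_ring (Kcirc Quot M)"
    using ring_hom_trans[OF frac_of_const_hom rcos_ring_hom] by (simp add: comp_def)
  have "inj_on ?h (carrier type_ring)"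
    using non_trivial_field_hom_is_inj[OF hom field_type_ring quotient_is_field[OF cring_Kcirc]] .
  moreover have "?h ` carrier type_ring = carrier (Kcirc Quot M)"
    using Kcirc_Quot_eq_const_cosets[OF assms] by (simp add: type_ring_def)
  ultimately have iso: "?h \<in> ring_iso type_ring (Kcirc Quot M)"
    using hom unfolding ring_iso_def bij_betw_def by blast
  then have "(type_ring :: 'k ring) \<simeq> Kcirc Quot M" unfolding is_ring_iso_def by blast
  then have "Kcirc Quot M \<simeq> (type_ring :: 'k ring)" by (rule ring_iso_sym[OF field.is_ring[OF field_type_ring]])
  with iso show ?thesis ..
qed

end
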